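(* There exists a constant $C_0=C_0(n,p)>0$ such that for every ball $B_r(x_0)\subset\mathbb{R}^n$ and all $\mathbf{v},\mathbf{w}\in W^{1,2}(B_r(x_0);\mathbb{R}^m)$ with $\mathbf{v}=\mathbf{w}$ on $\partial B_r(x_0)$, $$\int_{B_r(x_0)}\left(|\mathbf{v}|^p-|\mathbf{w}|^p\right)\le\frac p4\int_{B_r(x_0)}|\nabla(\mathbf{v}-\mathbf{w})|^2+C_0\,r^{n+\frac{2p}{2-p}}.$$
   Context: Fix integers $n\ge2$, $m\ge1$ and $0<p<1$. Boundary equality is in the trace sense. *)

theory Defs
  imports "HOL-Analysis.Analysis"
begin

text \<open>Points of R^n are real^'n (n = CARD('n)). Vector-valued maps into R^m are
  represented as functions real^'n => nat => real, of which only the components k < m matter,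
  so that m can be quantified inside the statement (the constant must not depend on m).\<close>

definition partial :: "'n::finite \<Rightarrow> (real^'n \<Rightarrow> real) \<Rightarrow> real^'n \<Rightarrow> real" where
  "partial j \<phi> x = frechet_derivative \<phi> (at x) (axis j 1)"

definition test_fun :: "(real^'n::finite) set \<Rightarrow> (real^'n \<Rightarrow> real) \<Rightarrow> bool" where
  "test_fun U \<phi> \<longleftrightarrow> (\<forall>x. \<phi> differentiable (at x)) \<and> (\<forall>j. continuous_on UNIV (partial j \<phi>))
     \<and> compact (closure {x. \<phi> x \<noteq> 0}) \<and> closure {x. \<phi> x \<noteq> 0} \<subseteq> U"

definition weak_deriv :: "(real^'n::finite) set \<Rightarrow> (real^'n \<Rightarrow> real) \<Rightarrow> 'n \<Rightarrow> (real^'n \<Rightarrow> real) \<Rightarrow> bool" where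
  "weak_deriv U f j g \<longleftrightarrow> (\<forall>\<phi>. test_fun U \<phi> \<longrightarrow>
     integral\<^sup>L (lebesgue_on U) (\<lambda>x. f x * partial j \<phi> x) = - integral\<^sup>L (lebesgue_on U) (\<lambda>x. g x * \<phi> x))"

definition L2 :: "(real^'n::finite) set \<Rightarrow> (real^'n \<Rightarrow> real) \<Rightarrow> bool" where
  "L2 U f \<longleftrightarrow> f \<in> borel_measurable (lebesgue_on U) \<and> integrable (lebesgue_on U) (\<lambda>x. (f x)\<^sup>2)"

definition W12 :: "(real^'n::finite) set \<Rightarrow> nat \<Rightarrow> (real^'n \<Rightarrow> nat \<Rightarrow> real) \<Rightarrow> (real^'n \<Rightarrow> nat \<Rightarrow> real^'n) \<Rightarrow> bool" where
  "W12 U m u G \<longleftrightarrow> (\<forall>k<m. L2 U (\<lambda>x. u x k) \<and>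
      (\<forall>j. L2 U (\<lambda>x. G x k $ j) \<and> weak_deriv U (\<lambda>x. u x k) j (\<lambda>x. G x k $ j)))"

text \<open>u \<in> W^{1,2}_0(U;R^m): W^{1,2}-limit of test functions (zero trace).\<close>
definition W012 :: "(real^'n::finite) set \<Rightarrow> nat \<Rightarrow> (real^'n \<Rightarrow> nat \<Rightarrow> real) \<Rightarrow> (real^'n \<Rightarrow> nat \<Rightarrow> real^'n) \<Rightarrow> bool" where
  "W012 U m u G \<longleftrightarrow> W12 U m u G \<and>
     (\<exists>\<phi> :: nat \<Rightarrow> real^'n \<Rightarrow> nat \<Rightarrow> real.
        (\<forall>i k. k < m \<longrightarrow> test_fun U (\<lambda>x. \<phi> i x k)) \<and>
        (\<lambda>i. integral\<^sup>L (lebesgue_on U) (\<lambda>x. \<Sum>k<m. (\<phi> i x k - u x k)\<^sup>2)) \<longlonglongrightarrow> 0 \<and>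
        (\<lambda>i. integral\<^sup>L (lebesgue_on U)
              (\<lambda>x. \<Sum>k<m. \<Sum>j\<in>UNIV. (partial j (\<lambda>y. \<phi> i y k) x - G x k $ j)\<^sup>2)) \<longlonglongrightarrow> 0)"

definition vnorm :: "nat \<Rightarrow> (nat \<Rightarrow> real) \<Rightarrow> real" where
  "vnorm m a = sqrt (\<Sum>k<m. (a k)\<^sup>2)"

definition gnorm2 :: "nat \<Rightarrow> (nat \<Rightarrow> real^'n::finite) \<Rightarrow> real" where
  "gnorm2 m A = (\<Sum>k<m. (norm (A k))\<^sup>2)"

end

theory Submission
  imports Defs
begin

text \<open>Pointwise, |v|^p - |w|^p <= |v - w|^p by the triangle inequality and subadditivity of
  t^p for p <= 1, and t^p <= e t^2 + e^(-p/(2-p)) for every e > 0. Take e = p/(16 r^2) and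
  integrate over B = B_r(x0): the constant term gives e^(-p/(2-p)) |B| = (p/16)^(-p/(2-p)) |B_1|
  r^(n + 2p/(2-p)), and the Poincare inequality int_B |u|^2 <= 4 r^2 int_B |Du|^2 for
  u = v - w in W^{1,2}_0 bounds e int_B |v - w|^2 by (p/4) int_B |D(v - w)|^2.
  The Poincare inequality is proved one coordinate at a time: testing the weak derivative D_j u
  against phi (x_j - x0_j) for test functions phi -> u gives int u^2 = -2 int u (x_j - x0_j) D_j u,
  and |x_j - x0_j| < r together with 2ab <= a^2/2 + 2b^2 concludes.\<close>

lemma integrable_mult_of_square_integrable:
  fixes f g :: "'a \<Rightarrow> real"
  assumes [measurable]: "f \<in> borel_measurable M" "g \<in> borel_measurable M"
    and "integrable M (\<lambda>x. (f x)\<^sup>2)" "integrable M (\<lambda>x. (g x)\<^sup>2)"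
  shows "integrable M (\<lambda>x. f x * g x)"
proof (rule Bochner_Integration.integrable_bound)
  show "integrable M (\<lambda>x. (f x)\<^sup>2 + (g x)\<^sup>2)"
    using assms by auto
  show "AE x in M. norm (f x * g x) \<le> norm ((f x)\<^sup>2 + (g x)\<^sup>2)"
  proof (intro AE_I2)
    fix x
    have "norm (f x * g x) \<le> 2 * \<bar>f x\<bar> * \<bar>g x\<bar>"
      by (simp add: abs_mult)
    also have "\<dots> \<le> norm ((f x)\<^sup>2 + (g x)\<^sup>2)"
      using sum_squares_bound[of "\<bar>f x\<bar>" "\<bar>g x\<bar>"] by simp
    finally show "norm (f x * g x) \<le> norm ((f x)\<^sup>2 + (g x)\<^sup>2)" .
  qed
qed simp

lemma abs_integral_mult_le_sqrt:
  fixes f g :: "'a \<Rightarrow> real"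
  assumes [measurable]: "f \<in> borel_measurable M" "g \<in> borel_measurable M"
    and "integrable M (\<lambda>x. (f x)\<^sup>2)" "integrable M (\<lambda>x. (g x)\<^sup>2)"
  shows "\<bar>\<integral>x. f x * g x \<partial>M\<bar> \<le> sqrt (\<integral>x. (f x)\<^sup>2 \<partial>M) * sqrt (\<integral>x. (g x)\<^sup>2 \<partial>M)"
proof -
  have fg: "integrable M (\<lambda>x. \<bar>f x\<bar> * \<bar>g x\<bar>)"
    using integrable_abs[OF integrable_mult_of_square_integrable[OF assms]] by (simp add: abs_mult)
  have "ennreal ((\<integral>x. \<bar>f x\<bar> * \<bar>g x\<bar> \<partial>M)\<^sup>2) = (\<integral>\<^sup>+x. \<bar>f x\<bar> * \<bar>g x\<bar> \<partial>M)\<^sup>2"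
    using fg by (simp add: nn_integral_eq_integral ennreal_power)
  also have "\<dots> \<le> (\<integral>\<^sup>+x. (f x)\<^sup>2 \<partial>M) * (\<integral>\<^sup>+x. (g x)\<^sup>2 \<partial>M)"
    using Cauchy_Schwarz_nn_integral[of "\<lambda>x. ennreal \<bar>f x\<bar>" M "\<lambda>x. ennreal \<bar>g x\<bar>"]
    by (simp add: ennreal_mult ennreal_power)
  also have "\<dots> = ennreal ((\<integral>x. (f x)\<^sup>2 \<partial>M) * (\<integral>x. (g x)\<^sup>2 \<partial>M))"
    using assms by (simp add: nn_integral_eq_integral ennreal_mult)
  finally have "(\<integral>x. \<bar>f x\<bar> * \<bar>g x\<bar> \<partial>M)\<^sup>2 \<le> (\<integral>x. (f x)\<^sup>2 \<partial>M) * (\<integral>x. (g x)\<^sup>2 \<partial>M)"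
    by simp
  then have "(\<integral>x. \<bar>f x\<bar> * \<bar>g x\<bar> \<partial>M) \<le> sqrt (\<integral>x. (f x)\<^sup>2 \<partial>M) * sqrt (\<integral>x. (g x)\<^sup>2 \<partial>M)"
    by (metis real_le_rsqrt real_sqrt_mult)
  moreover have "\<bar>\<integral>x. f x * g x \<partial>M\<bar> \<le> (\<integral>x. \<bar>f x\<bar> * \<bar>g x\<bar> \<partial>M)"
    using integral_abs_bound[of M "\<lambda>x. f x * g x"] by (simp add: abs_mult)
  ultimately show ?thesis
    by linarith
qed

lemma integral_tendsto_zero_if_dominated:
  fixes f g :: "nat \<Rightarrow> 'a \<Rightarrow> real"
  assumes "\<And>i. integrable M (g i)"
    and "\<And>i x. x \<in> space M \<Longrightarrow> 0 \<le> f i x" "\<And>i x. x \<in> space M \<Longrightarrow> f i x \<le> g i x"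
    and "(\<lambda>i. integral\<^sup>L M (g i)) \<longlonglongrightarrow> 0"
  shows "(\<lambda>i. integral\<^sup>L M (f i)) \<longlonglongrightarrow> 0"
proof (rule Lim_null_comparison[OF always_eventually assms(4)], intro allI)
  fix i
  have "0 \<le> g i x" if "x \<in> space M" for x
    using assms(2,3)[OF that] by (rule order_trans)
  then have "integral\<^sup>L M (f i) \<le> integral\<^sup>L M (g i)"
    using assms(1,3) by (intro integral_mono')
  then show "norm (integral\<^sup>L M (f i)) \<le> integral\<^sup>L M (g i)"
    using assms(2) by simp
qed

lemma L2_integrable_mult: "L2 U f \<Longrightarrow> L2 U g \<Longrightarrow> integrable (lebesgue_on U) (\<lambda>x. f x * g x)"
  unfolding L2_def by (intro integrable_mult_of_square_integrable) auto

lemma L2_abs_integral_mult_le: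
  "L2 U f \<Longrightarrow> L2 U g \<Longrightarrow> \<bar>\<integral>x. f x * g x \<partial>lebesgue_on U\<bar>
     \<le> sqrt (\<integral>x. (f x)\<^sup>2 \<partial>lebesgue_on U) * sqrt (\<integral>x. (g x)\<^sup>2 \<partial>lebesgue_on U)"
  unfolding L2_def by (intro abs_integral_mult_le_sqrt) auto

lemma L2_diff:
  assumes "L2 U f" "L2 U g"
  shows "L2 U (\<lambda>x. f x - g x)"
proof -
  have "integrable (lebesgue_on U) (\<lambda>x. (f x)\<^sup>2 + (g x)\<^sup>2 - 2 * (f x * g x))"
    using assms L2_integrable_mult[OF assms] unfolding L2_def by auto
  moreover have "(\<lambda>x. (f x)\<^sup>2 + (g x)\<^sup>2 - 2 * (f x * g x)) = (\<lambda>x. (f x - g x)\<^sup>2)"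
    by (simp add: fun_eq_iff power2_diff)
  ultimately show ?thesis
    using assms unfolding L2_def by auto
qed

lemma L2_mult_bounded:
  assumes f: "L2 U f" and b: "b \<in> borel_measurable (lebesgue_on U)" "\<And>x. x \<in> U \<Longrightarrow> \<bar>b x\<bar> \<le> B"
  shows "L2 U (\<lambda>x. f x * b x)"
proof -
  have "integrable (lebesgue_on U) (\<lambda>x. (f x * b x)\<^sup>2)"
  proof (rule Bochner_Integration.integrable_bound)
    show "integrable (lebesgue_on U) (\<lambda>x. B\<^sup>2 * (f x)\<^sup>2)"
      using f unfolding L2_def by auto
    show "AE x in lebesgue_on U. norm ((f x * b x)\<^sup>2) \<le> norm (B\<^sup>2 * (f x)\<^sup>2)"
    proof (intro AE_I2)
      fix x
      assume "x \<in> space (lebesgue_on U)"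
      then have "\<bar>b x\<bar> \<le> B"
        using b(2) by simp
      then have "(b x)\<^sup>2 \<le> B\<^sup>2"
        by (metis abs_ge_zero power2_abs power_mono)
      then show "norm ((f x * b x)\<^sup>2) \<le> norm (B\<^sup>2 * (f x)\<^sup>2)"
        by (simp add: power_mult_distrib mult_right_mono mult.commute)
    qed
  qed (use f b in \<open>auto simp: L2_def\<close>)
  then show ?thesis
    using f b unfolding L2_def by auto
qed

lemma continuous_imp_L2_ball:
  fixes f :: "real^'n::finite \<Rightarrow> real"
  assumes f: "continuous_on UNIV f"
  shows "L2 (ball x0 r) f"
proof -
  interpret finite_measure "lebesgue_on (ball x0 r)"
    by (rule finite_measure_lebesgue_on) simp
  have f_cball: "continuous_on (cball x0 r) f"
    using f by (rule continuous_on_subset) simp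
  have "compact ((\<lambda>x. (f x)\<^sup>2) ` cball x0 r)"
    using f_cball by (intro compact_continuous_image continuous_intros) auto
  then obtain B where B: "\<And>x. x \<in> cball x0 r \<Longrightarrow> norm ((f x)\<^sup>2) \<le> B"
    by (meson bounded_iff compact_imp_bounded imageI)
  have "f \<in> borel_measurable (lebesgue_on (ball x0 r))"
    using f by (intro continuous_imp_measurable_on_sets_lebesgue) (auto intro: continuous_on_subset)
  moreover have "integrable (lebesgue_on (ball x0 r)) (\<lambda>x. (f x)\<^sup>2)"
    using B \<open>f \<in> _\<close> by (intro integrable_const_bound[where B=B]) auto
  ultimately show ?thesis
    unfolding L2_def ..
qed

lemma L2_integral_mult_tendsto:
  assumes f: "L2 U f" and g: "L2 U g" "\<And>i. L2 U (g' i)"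
    and lim: "(\<lambda>i. \<integral>x. (g' i x - g x)\<^sup>2 \<partial>lebesgue_on U) \<longlonglongrightarrow> 0"
  shows "(\<lambda>i. \<integral>x. f x * g' i x \<partial>lebesgue_on U) \<longlonglongrightarrow> (\<integral>x. f x * g x \<partial>lebesgue_on U)"
proof -
  have "(\<lambda>i. (\<integral>x. f x * g' i x \<partial>lebesgue_on U) - (\<integral>x. f x * g x \<partial>lebesgue_on U)) \<longlonglongrightarrow> 0"
  proof (rule Lim_null_comparison[OF always_eventually], intro allI)
    fix i
    have "(\<integral>x. f x * g' i x \<partial>lebesgue_on U) - (\<integral>x. f x * g x \<partial>lebesgue_on U)
        = (\<integral>x. f x * (g' i x - g x) \<partial>lebesgue_on U)"
      using L2_integrable_mult[OF f g(2)] L2_integrable_mult[OF f g(1)]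
      by (simp add: right_diff_distrib)
    then show "norm ((\<integral>x. f x * g' i x \<partial>lebesgue_on U) - (\<integral>x. f x * g x \<partial>lebesgue_on U))
        \<le> sqrt (\<integral>x. (f x)\<^sup>2 \<partial>lebesgue_on U) * sqrt (\<integral>x. (g' i x - g x)\<^sup>2 \<partial>lebesgue_on U)"
      using L2_abs_integral_mult_le[OF f L2_diff[OF g(2) g(1)]] by simp
  next
    show "(\<lambda>i. sqrt (\<integral>x. (f x)\<^sup>2 \<partial>lebesgue_on U) * sqrt (\<integral>x. (g' i x - g x)\<^sup>2 \<partial>lebesgue_on U))
        \<longlonglongrightarrow> 0"
      using tendsto_real_sqrt[OF lim] by (simp add: tendsto_mult_right_zero)
  qed
  then show ?thesis
    by (rule LIM_zero_cancel)
qed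

lemma partial_mult_coordinate:
  fixes \<phi> :: "real^'n::finite \<Rightarrow> real"
  assumes "\<phi> differentiable (at x)"
  shows "partial i (\<lambda>y. \<phi> y * (y$j - c)) x = \<phi> x * (if i = j then 1 else 0) + partial i \<phi> x * (x$j - c)"
proof -
  have "((\<lambda>y. \<phi> y * (y$j - c)) has_derivative
      (\<lambda>h. \<phi> x * h$j + frechet_derivative \<phi> (at x) h * (x$j - c))) (at x)"
    using assms by (auto intro!: derivative_eq_intros bounded_linear_imp_has_derivative
        simp: frechet_derivative_works[symmetric])
  then show ?thesis
    unfolding partial_def by (simp add: frechet_derivative_at[symmetric] axis_def)
qed

lemma test_fun_continuous: "test_fun U \<phi> \<Longrightarrow> continuous_on UNIV \<phi>"
  unfolding test_fun_def by (simp add: differentiable_imp_continuous_on differentiable_on_def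
      differentiable_at_withinI)

lemma test_fun_mult_coordinate:
  fixes \<phi> :: "real^'n::finite \<Rightarrow> real"
  assumes \<phi>: "test_fun U \<phi>"
  shows "test_fun U (\<lambda>y. \<phi> y * (y$j - c))"
proof -
  have diff: "\<And>x. \<phi> differentiable (at x)" and cont: "\<And>i. continuous_on UNIV (partial i \<phi>)"
    and supp: "compact (closure {x. \<phi> x \<noteq> 0})" "closure {x. \<phi> x \<noteq> 0} \<subseteq> U"
    using \<phi> unfolding test_fun_def by auto
  have "(\<lambda>y. \<phi> y * (y$j - c)) differentiable (at x)" for x
    using diff bounded_linear_imp_differentiable[OF bounded_linear_vec_nth[of j]]
    by (intro differentiable_mult differentiable_diff differentiable_const)
  moreover have "continuous_on UNIV (partial i (\<lambda>y. \<phi> y * (y$j - c)))" for i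
  proof -
    have eq: "partial i (\<lambda>y. \<phi> y * (y$j - c))
        = (\<lambda>x. \<phi> x * (if i = j then 1 else 0) + partial i \<phi> x * (x$j - c))"
      using partial_mult_coordinate[OF diff] by (simp add: fun_eq_iff)
    show ?thesis
      unfolding eq using cont[of i] test_fun_continuous[OF \<phi>] by (intro continuous_intros)
  qed
  moreover have sub: "closure {x. \<phi> x * (x$j - c) \<noteq> 0} \<subseteq> closure {x. \<phi> x \<noteq> 0}"
    by (rule closure_mono) auto
  moreover have "bounded {x. \<phi> x \<noteq> 0}"
    using supp(1) compact_closure by blast
  then have "compact (closure {x. \<phi> x * (x$j - c) \<noteq> 0})"
    unfolding compact_closure by (rule bounded_subset) auto
  ultimately show ?thesis
    using supp(2) unfolding test_fun_def by blast
qed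

lemma integral_square_eq_by_parts_coordinate:
  fixes u g :: "real^'n::finite \<Rightarrow> real" and \<phi> :: "nat \<Rightarrow> real^'n \<Rightarrow> real"
  assumes u: "L2 (ball x0 r) u" and g: "L2 (ball x0 r) g"
    and weak: "weak_deriv (ball x0 r) u j g"
    and \<phi>: "\<And>i. test_fun (ball x0 r) (\<phi> i)"
    and \<phi>_u: "(\<lambda>i. \<integral>x. (\<phi> i x - u x)\<^sup>2 \<partial>lebesgue_on (ball x0 r)) \<longlonglongrightarrow> 0"
    and d\<phi>_g: "(\<lambda>i. \<integral>x. (partial j (\<phi> i) x - g x)\<^sup>2 \<partial>lebesgue_on (ball x0 r)) \<longlonglongrightarrow> 0"
  shows "(\<integral>x. (u x)\<^sup>2 \<partial>lebesgue_on (ball x0 r))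
    = - 2 * (\<integral>x. u x * (x$j - x0$j) * g x \<partial>lebesgue_on (ball x0 r))"
proof -
  let ?M = "lebesgue_on (ball x0 r)"
  define h where "h x = x$j - x0$j" for x :: "real^'n"
  have "h \<in> borel_measurable ?M"
    unfolding h_def by (intro continuous_imp_measurable_on_sets_lebesgue continuous_intros) auto
  moreover have "\<bar>h x\<bar> \<le> r" if "x \<in> ball x0 r" for x
    using component_le_norm_cart[of "x - x0" j] that by (simp add: h_def dist_norm norm_minus_commute)
  ultimately have uh: "L2 (ball x0 r) (\<lambda>x. u x * h x)" and gh: "L2 (ball x0 r) (\<lambda>x. g x * h x)"
    using L2_mult_bounded u g by blast+
  have \<phi>_L2: "L2 (ball x0 r) (\<phi> i)" for i
    by (intro continuous_imp_L2_ball test_fun_continuous[OF \<phi>])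
  have d\<phi>_L2: "L2 (ball x0 r) (partial j (\<phi> i))" for i
    using \<phi>[of i] unfolding test_fun_def by (intro continuous_imp_L2_ball) blast
  have by_parts: "(\<integral>x. u x * \<phi> i x \<partial>?M) + (\<integral>x. (u x * h x) * partial j (\<phi> i) x \<partial>?M)
      = - (\<integral>x. (g x * h x) * \<phi> i x \<partial>?M)" for i
  proof -
    have "test_fun (ball x0 r) (\<lambda>y. \<phi> i y * h y)"
      unfolding h_def by (rule test_fun_mult_coordinate[OF \<phi>])
    then have "(\<integral>x. u x * partial j (\<lambda>y. \<phi> i y * h y) x \<partial>?M) = - (\<integral>x. g x * (\<phi> i x * h x) \<partial>?M)"
      using weak unfolding weak_deriv_def by blast
    moreover have "partial j (\<lambda>y. \<phi> i y * h y) x = \<phi> i x + partial j (\<phi> i) x * h x" for x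
      using \<phi>[of i] partial_mult_coordinate[of "\<phi> i" x j j "x0$j"] unfolding test_fun_def h_def by simp
    ultimately show ?thesis
      using L2_integrable_mult[OF u \<phi>_L2] L2_integrable_mult[OF uh d\<phi>_L2]
      by (simp add: distrib_left ac_simps)
  qed
  have "(\<lambda>i. (\<integral>x. u x * \<phi> i x \<partial>?M) + (\<integral>x. (u x * h x) * partial j (\<phi> i) x \<partial>?M))
      \<longlonglongrightarrow> (\<integral>x. u x * u x \<partial>?M) + (\<integral>x. (u x * h x) * g x \<partial>?M)"
    using u g uh \<phi>_L2 d\<phi>_L2 \<phi>_u d\<phi>_g by (intro tendsto_add L2_integral_mult_tendsto)
  moreover have "(\<lambda>i. - (\<integral>x. (g x * h x) * \<phi> i x \<partial>?M)) \<longlonglongrightarrow> - (\<integral>x. (g x * h x) * u x \<partial>?M)"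
    using u gh \<phi>_L2 \<phi>_u by (intro tendsto_minus L2_integral_mult_tendsto)
  ultimately have "(\<integral>x. u x * u x \<partial>?M) + (\<integral>x. (u x * h x) * g x \<partial>?M) = - (\<integral>x. (g x * h x) * u x \<partial>?M)"
    unfolding by_parts by (rule LIMSEQ_unique)
  then show ?thesis
    unfolding h_def by (simp add: power2_eq_square ac_simps)
qed

lemma Poincare_ball_coordinate:
  fixes u g :: "real^'n::finite \<Rightarrow> real" and \<phi> :: "nat \<Rightarrow> real^'n \<Rightarrow> real"
  assumes u: "L2 (ball x0 r) u" and g: "L2 (ball x0 r) g"
    and weak: "weak_deriv (ball x0 r) u j g"
    and \<phi>: "\<And>i. test_fun (ball x0 r) (\<phi> i)"
    and \<phi>_u: "(\<lambda>i. \<integral>x. (\<phi> i x - u x)\<^sup>2 \<partial>lebesgue_on (ball x0 r)) \<longlonglongrightarrow> 0"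
    and d\<phi>_g: "(\<lambda>i. \<integral>x. (partial j (\<phi> i) x - g x)\<^sup>2 \<partial>lebesgue_on (ball x0 r)) \<longlonglongrightarrow> 0"
  shows "(\<integral>x. (u x)\<^sup>2 \<partial>lebesgue_on (ball x0 r)) \<le> 4 * r\<^sup>2 * (\<integral>x. (g x)\<^sup>2 \<partial>lebesgue_on (ball x0 r))"
proof -
  let ?M = "lebesgue_on (ball x0 r)"
  have pointwise: "- 2 * (u x * (x$j - x0$j) * g x) \<le> (u x)\<^sup>2 / 2 + 2 * r\<^sup>2 * (g x)\<^sup>2"
    if "x \<in> ball x0 r" for x
  proof -
    have h: "\<bar>x$j - x0$j\<bar> \<le> r"
      using component_le_norm_cart[of "x - x0" j] that by (simp add: dist_norm norm_minus_commute)
    have "- 2 * (u x * (x$j - x0$j) * g x) \<le> 2 * (\<bar>u x\<bar> * \<bar>x$j - x0$j\<bar> * \<bar>g x\<bar>)"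
      using abs_ge_minus_self[of "u x * (x$j - x0$j) * g x"] unfolding abs_mult by linarith
    also have "\<dots> \<le> 2 * (\<bar>u x\<bar> * r * \<bar>g x\<bar>)"
      using h by (intro mult_left_mono mult_right_mono) auto
    also have "\<dots> \<le> (u x)\<^sup>2 / 2 + 2 * r\<^sup>2 * (g x)\<^sup>2"
      using sum_squares_bound[of "\<bar>u x\<bar>" "2 * r * \<bar>g x\<bar>"] by (simp add: power_mult_distrib)
    finally show ?thesis .
  qed
  have integrable: "integrable ?M (\<lambda>x. (u x)\<^sup>2 / 2 + 2 * r\<^sup>2 * (g x)\<^sup>2)"
    using u g unfolding L2_def by auto
  have "(\<integral>x. (u x)\<^sup>2 \<partial>?M) = (\<integral>x. - 2 * (u x * (x$j - x0$j) * g x) \<partial>?M)"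
    using integral_square_eq_by_parts_coordinate[OF assms] by simp
  also have "\<dots> \<le> (\<integral>x. (u x)\<^sup>2 / 2 + 2 * r\<^sup>2 * (g x)\<^sup>2 \<partial>?M)"
    using pointwise by (intro integral_mono'[OF integrable]) auto
  also have "\<dots> = (\<integral>x. (u x)\<^sup>2 \<partial>?M) / 2 + 2 * r\<^sup>2 * (\<integral>x. (g x)\<^sup>2 \<partial>?M)"
    using u g unfolding L2_def by simp
  finally show ?thesis
    by simp
qed

lemma W12_integrable_sum_squares:
  assumes "W12 U m u G"
  shows "integrable (lebesgue_on U) (\<lambda>x. \<Sum>k<m. (u x k)\<^sup>2)"
  using assms unfolding W12_def L2_def by (intro Bochner_Integration.integrable_sum) auto

lemma Poincare_ball:
  fixes u :: "real^'n::finite \<Rightarrow> nat \<Rightarrow> real" and G :: "real^'n \<Rightarrow> nat \<Rightarrow> real^'n"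
  assumes "W012 (ball x0 r) m u G"
  shows "(\<integral>x. (\<Sum>k<m. (u x k)\<^sup>2) \<partial>lebesgue_on (ball x0 r))
    \<le> 4 * r\<^sup>2 * (\<integral>x. gnorm2 m (G x) \<partial>lebesgue_on (ball x0 r))"
proof -
  let ?M = "lebesgue_on (ball x0 r)"
  \<comment> \<open>a single, arbitrary coordinate direction suffices, as |D_j u_k| <= |D u_k|\<close>
  fix j :: 'n
  obtain \<phi> :: "nat \<Rightarrow> real^'n \<Rightarrow> nat \<Rightarrow> real" where
    \<phi>: "\<And>i k. k < m \<Longrightarrow> test_fun (ball x0 r) (\<lambda>x. \<phi> i x k)" and
    \<phi>_u: "(\<lambda>i. \<integral>x. (\<Sum>k<m. (\<phi> i x k - u x k)\<^sup>2) \<partial>?M) \<longlonglongrightarrow> 0" and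
    d\<phi>_G: "(\<lambda>i. \<integral>x. (\<Sum>k<m. \<Sum>j\<in>UNIV. (partial j (\<lambda>y. \<phi> i y k) x - G x k $ j)\<^sup>2) \<partial>?M) \<longlonglongrightarrow> 0"
    using assms unfolding W012_def by blast
  have u: "L2 (ball x0 r) (\<lambda>x. u x k)" and G: "L2 (ball x0 r) (\<lambda>x. G x k $ j')"
    and weak: "weak_deriv (ball x0 r) (\<lambda>x. u x k) j' (\<lambda>x. G x k $ j')" if "k < m" for k j'
    using assms that unfolding W012_def W12_def by blast+
  have \<phi>_L2: "L2 (ball x0 r) (\<lambda>x. \<phi> i x k)" if "k < m" for i k
    using that by (intro continuous_imp_L2_ball test_fun_continuous[OF \<phi>])
  have d\<phi>_L2: "L2 (ball x0 r) (partial j' (\<lambda>y. \<phi> i y k))" if "k < m" for i k j'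
    using \<phi>[OF that, of i] unfolding test_fun_def by (intro continuous_imp_L2_ball) blast
  have norm_G: "(norm (G x k))\<^sup>2 = (\<Sum>j\<in>UNIV. (G x k $ j)\<^sup>2)" for x k
    unfolding power2_norm_eq_inner inner_vec_def by (simp add: power2_eq_square)
  have component: "(\<integral>x. (u x k)\<^sup>2 \<partial>?M) \<le> 4 * r\<^sup>2 * (\<integral>x. (norm (G x k))\<^sup>2 \<partial>?M)"
    if k: "k < m" for k
  proof -
    have "(\<lambda>i. \<integral>x. (\<phi> i x k - u x k)\<^sup>2 \<partial>?M) \<longlonglongrightarrow> 0"
    proof (rule integral_tendsto_zero_if_dominated[OF _ _ _ \<phi>_u])
      show "integrable ?M (\<lambda>x. \<Sum>k<m. (\<phi> i x k - u x k)\<^sup>2)" for i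
        using L2_diff[OF \<phi>_L2 u] unfolding L2_def by (intro Bochner_Integration.integrable_sum) auto
      show "(\<phi> i x k - u x k)\<^sup>2 \<le> (\<Sum>k<m. (\<phi> i x k - u x k)\<^sup>2)" for i x
        using k by (intro member_le_sum) auto
    qed simp
    moreover have "(\<lambda>i. \<integral>x. (partial j (\<lambda>y. \<phi> i y k) x - G x k $ j)\<^sup>2 \<partial>?M) \<longlonglongrightarrow> 0"
    proof (rule integral_tendsto_zero_if_dominated[OF _ _ _ d\<phi>_G])
      show "integrable ?M (\<lambda>x. \<Sum>k<m. \<Sum>j\<in>UNIV. (partial j (\<lambda>y. \<phi> i y k) x - G x k $ j)\<^sup>2)" for i
        using L2_diff[OF d\<phi>_L2 G] unfolding L2_def by (intro Bochner_Integration.integrable_sum) auto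
      show "(partial j (\<lambda>y. \<phi> i y k) x - G x k $ j)\<^sup>2
          \<le> (\<Sum>k<m. \<Sum>j\<in>UNIV. (partial j (\<lambda>y. \<phi> i y k) x - G x k $ j)\<^sup>2)" for i x
        using k by (intro member_le_sum[THEN order_trans[rotated]] sum_nonneg) auto
    qed simp
    ultimately have "(\<integral>x. (u x k)\<^sup>2 \<partial>?M) \<le> 4 * r\<^sup>2 * (\<integral>x. (G x k $ j)\<^sup>2 \<partial>?M)"
      using k by (intro Poincare_ball_coordinate[OF u G weak \<phi>])
    also have "\<dots> \<le> 4 * r\<^sup>2 * (\<integral>x. (norm (G x k))\<^sup>2 \<partial>?M)"
      using G[OF k] unfolding norm_G L2_def
      by (intro mult_left_mono integral_mono' Bochner_Integration.integrable_sum member_le_sum sum_nonneg) auto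
    finally show ?thesis .
  qed
  have "(\<integral>x. (\<Sum>k<m. (u x k)\<^sup>2) \<partial>?M) = (\<Sum>k<m. \<integral>x. (u x k)\<^sup>2 \<partial>?M)"
    using u unfolding L2_def by (intro Bochner_Integration.integral_sum) auto
  also have "\<dots> \<le> (\<Sum>k<m. 4 * r\<^sup>2 * (\<integral>x. (norm (G x k))\<^sup>2 \<partial>?M))"
    using component by (intro sum_mono) auto
  also have "\<dots> = 4 * r\<^sup>2 * (\<integral>x. gnorm2 m (G x) \<partial>?M)"
    using G unfolding gnorm2_def norm_G L2_def sum_distrib_left[symmetric]
    by (subst Bochner_Integration.integral_sum) (auto intro: Bochner_Integration.integrable_sum)
  finally show ?thesis .
qed

lemma powr_add_le_add_powr:
  fixes s t p :: real
  assumes "0 \<le> s" "0 \<le> t" "0 < p" "p \<le> 1"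
  shows "(s + t) powr p \<le> s powr p + t powr p"
proof (cases "s + t = 0")
  case False
  then have st: "s + t > 0"
    using assms by linarith
  have weighted: "a * (s + t) powr (p - 1) \<le> a powr p" if "0 \<le> a" "a \<le> s + t" for a
  proof (cases "a = 0")
    case False
    then have "(s + t) powr (p - 1) \<le> a powr (p - 1)"
      using powr_mono2'[of "p - 1" a "s + t"] that assms by simp
    then have "a * (s + t) powr (p - 1) \<le> a * a powr (p - 1)"
      using that by (intro mult_left_mono) auto
    also have "\<dots> = a powr p"
      using False that by (simp add: powr_mult_base)
    finally show ?thesis .
  qed simp
  have "(s + t) powr p = s * (s + t) powr (p - 1) + t * (s + t) powr (p - 1)"
    using st by (simp add: powr_mult_base distrib_right[symmetric])
  also have "\<dots> \<le> s powr p + t powr p"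
    using weighted[of s] weighted[of t] assms by simp
  finally show ?thesis .
qed simp

lemma powr_le_square_plus_const:
  fixes x e p :: real
  assumes "0 \<le> x" "0 < e" "0 < p" "p < 2"
  shows "x powr p \<le> e * x\<^sup>2 + e powr (- p / (2 - p))"
proof -
  define T where "T = e powr (- 1 / (2 - p))"
  have "T > 0"
    unfolding T_def using assms by simp
  show ?thesis
  proof (cases "x \<le> T")
    case True
    have "x powr p \<le> T powr p"
      using True assms by (intro powr_mono2) auto
    also have "\<dots> = e powr (- p / (2 - p))"
      unfolding T_def powr_powr by simp
    finally show ?thesis
      using assms by (simp add: add_increasing)
  next
    case False
    have exponent: "- 1 / (2 - p) * (p - 2) = 1"
      using assms by (simp add: field_simps)
    have "x powr p = x powr 2 * x powr (p - 2)"
      by (simp add: powr_add[symmetric])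
    also have "\<dots> \<le> x powr 2 * T powr (p - 2)"
      using powr_mono2'[of "p - 2" T x] False \<open>T > 0\<close> assms by (intro mult_left_mono) auto
    also have "T powr (p - 2) = e"
      unfolding T_def powr_powr exponent using assms by simp
    finally have "x powr p \<le> e * x\<^sup>2"
      using \<open>T > 0\<close> False by (simp add: mult.commute)
    then show ?thesis
      by (simp add: add_increasing2)
  qed
qed

lemma vnorm_nonneg: "0 \<le> vnorm m a"
  unfolding vnorm_def by (simp add: sum_nonneg)

lemma vnorm_triangle: "vnorm m (\<lambda>k. a k + b k) \<le> vnorm m a + vnorm m b"
  unfolding vnorm_def using L2_set_triangle_ineq[of a b "{..<m}"] by (simp add: L2_set_def)

lemma vnorm_powr_diff_le:
  assumes "0 < p" "p < 1" "0 < e"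
  shows "vnorm m v powr p - vnorm m w powr p \<le> e * (\<Sum>k<m. (v k - w k)\<^sup>2) + e powr (- p / (2 - p))"
proof -
  have "vnorm m v powr p \<le> (vnorm m (\<lambda>k. v k - w k) + vnorm m w) powr p"
    using vnorm_triangle[of m "\<lambda>k. v k - w k" w] assms by (intro powr_mono2) (auto simp: vnorm_nonneg)
  also have "\<dots> \<le> vnorm m (\<lambda>k. v k - w k) powr p + vnorm m w powr p"
    using assms by (intro powr_add_le_add_powr vnorm_nonneg) auto
  finally have "vnorm m v powr p - vnorm m w powr p \<le> vnorm m (\<lambda>k. v k - w k) powr p"
    by simp
  also have "\<dots> \<le> e * (vnorm m (\<lambda>k. v k - w k))\<^sup>2 + e powr (- p / (2 - p))"
    using assms by (intro powr_le_square_plus_const vnorm_nonneg) auto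
  finally show ?thesis
    unfolding vnorm_def by (simp add: sum_nonneg)
qed

lemma integral_vnorm_powr_diff_le:
  assumes "finite_measure M" "0 < p" "p < 1" "0 < e"
    and "integrable M (\<lambda>x. \<Sum>k<m. (v x k - w x k)\<^sup>2)"
  shows "(\<integral>x. vnorm m (v x) powr p - vnorm m (w x) powr p \<partial>M)
    \<le> e * (\<integral>x. (\<Sum>k<m. (v x k - w x k)\<^sup>2) \<partial>M) + e powr (- p / (2 - p)) * measure M (space M)"
proof -
  let ?bound = "\<lambda>x. e * (\<Sum>k<m. (v x k - w x k)\<^sup>2) + e powr (- p / (2 - p))"
  have integrable: "integrable M ?bound"
    using assms(1,5) by (simp add: finite_measure.integrable_const)
  \<comment> \<open>the left integrand need not be integrable: otherwise its Bochner integral is 0\<close>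
  have "(\<integral>x. vnorm m (v x) powr p - vnorm m (w x) powr p \<partial>M) \<le> (\<integral>x. ?bound x \<partial>M)"
    using assms(2-4) vnorm_powr_diff_le
    by (intro integral_mono'[OF integrable]) (auto intro!: add_nonneg_nonneg mult_nonneg_nonneg sum_nonneg)
  also have "\<dots> = e * (\<integral>x. (\<Sum>k<m. (v x k - w x k)\<^sup>2) \<partial>M) + e powr (- p / (2 - p)) * measure M (space M)"
    using assms(1,5) by (simp add: finite_measure.integrable_const)
  finally show ?thesis .
qed

lemma measure_lebesgue_on_ball:
  fixes x0 :: "'a::euclidean_space"
  assumes "0 \<le> r"
  shows "measure (lebesgue_on (ball x0 r)) (ball x0 r) = unit_ball_vol DIM('a) * r ^ DIM('a)"
  using assms content_ball[of r x0] by (simp add: measure_restrict_space)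

lemma powr_scaled_square_mult_power:
  fixes c r q :: real
  assumes "0 < c" "0 < r"
  shows "(c / r\<^sup>2) powr (- q) * r ^ n = c powr (- q) * r powr (real n + 2 * q)"
proof -
  have "(c / r\<^sup>2) powr (- q) = c powr (- q) / (r powr 2) powr (- q)"
    using assms by (simp add: powr_divide powr_numeral)
  also have "\<dots> = c powr (- q) * r powr (2 * q)"
    by (simp add: powr_powr powr_minus_divide)
  finally have "(c / r\<^sup>2) powr (- q) = c powr (- q) * r powr (2 * q)" .
  moreover have "r ^ n = r powr real n"
    using assms by (simp add: powr_realpow)
  ultimately show ?thesis
    by (simp add: powr_add)
qed

lemma integral_vnorm_powr_diff_le_ball:
  fixes x0 :: "real^'n::finite"
  assumes "0 < p" "p < 1" "0 < r"
    and W: "W012 (ball x0 r) m (\<lambda>x k. v x k - w x k) G"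
  shows "(\<integral>x. vnorm m (v x) powr p - vnorm m (w x) powr p \<partial>lebesgue_on (ball x0 r))
    \<le> p / 4 * (\<integral>x. gnorm2 m (G x) \<partial>lebesgue_on (ball x0 r))
      + (p / 16) powr (- p / (2 - p)) * unit_ball_vol CARD('n) * r powr (CARD('n) + 2 * p / (2 - p))"
proof -
  let ?M = "lebesgue_on (ball x0 r)"
  define q where "q = p / (2 - p)"
  define e where "e = p / 16 / r\<^sup>2"
  have "e > 0"
    unfolding e_def using assms by simp
  have finite: "finite_measure ?M"
    by (rule finite_measure_lebesgue_on) simp
  have integrable: "integrable ?M (\<lambda>x. \<Sum>k<m. (v x k - w x k)\<^sup>2)"
    using W unfolding W012_def by (auto dest: W12_integrable_sum_squares)
  have "(\<integral>x. vnorm m (v x) powr p - vnorm m (w x) powr p \<partial>?M)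
      \<le> e * (\<integral>x. (\<Sum>k<m. (v x k - w x k)\<^sup>2) \<partial>?M) + e powr (- q) * measure ?M (space ?M)"
    using integral_vnorm_powr_diff_le[OF finite assms(1,2) \<open>e > 0\<close> integrable] unfolding q_def by simp
  also have "e * (\<integral>x. (\<Sum>k<m. (v x k - w x k)\<^sup>2) \<partial>?M) \<le> p / 4 * (\<integral>x. gnorm2 m (G x) \<partial>?M)"
    using mult_left_mono[OF Poincare_ball[OF W] less_imp_le[OF \<open>e > 0\<close>]] assms(3)
    by (simp add: e_def field_simps)
  also have "e powr (- q) * measure ?M (space ?M)
      = unit_ball_vol CARD('n) * ((p / 16 / r\<^sup>2) powr (- q) * r ^ CARD('n))"
    using assms(3) unfolding e_def by (simp add: measure_lebesgue_on_ball)
  also have "\<dots> = (p / 16) powr (- q) * unit_ball_vol CARD('n) * r powr (CARD('n) + 2 * q)"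
    using assms by (subst powr_scaled_square_mult_power) auto
  finally show ?thesis
    unfolding q_def by simp
qed

theorem lemma2p1:
  fixes p :: real
  assumes "CARD('n::finite) \<ge> 2" and "0 < p" and "p < 1"
  shows "\<exists>C0>0. \<forall>m::nat. m \<ge> 1 \<longrightarrow>
    (\<forall>(x0::real^'n) r v w Gv Gw.
       r > 0 \<and> W12 (ball x0 r) m v Gv \<and> W12 (ball x0 r) m w Gw \<and>
       W012 (ball x0 r) m (\<lambda>x k. v x k - w x k) (\<lambda>x k. Gv x k - Gw x k) \<longrightarrow>
       integral\<^sup>L (lebesgue_on (ball x0 r)) (\<lambda>x. vnorm m (v x) powr p - vnorm m (w x) powr p)
         \<le> p / 4 * integral\<^sup>L (lebesgue_on (ball x0 r)) (\<lambda>x. gnorm2 m (\<lambda>k. Gv x k - Gw x k))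
           + C0 * r powr (real CARD('n) + 2 * p / (2 - p)))"
proof -
  define C0 where "C0 = (p / 16) powr (- p / (2 - p)) * unit_ball_vol CARD('n)"
  have "C0 > 0"
    unfolding C0_def using assms(2) by simp
  then show ?thesis
    using integral_vnorm_powr_diff_le_ball[OF assms(2,3)] unfolding C0_def by blast
qed

end
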